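(* Let $(\mathcal{X},d)$ be a Polish metric space and $(P_x)_{x\in\mathcal{X}}$ a Markov kernel on $\mathcal{X}$ with $x\mapsto P_x$ measurable and each $P_x$ of finite first moment, and assume there is $\kappa>0$ with $W_1(P_x,P_y)\le(1-\kappa)d(x,y)$ for all $x,y$. Then for every integer $N\ge1$ and every Lipschitz $f:\mathcal{X}\to\mathbb{R}$, \[ P^N(f^2)-(P^Nf)^2\le\|f\|_{\mathrm{Lip}}^2\sum_{k=0}^{N-1}(1-\kappa)^{2(N-1-k)}P^k\Big(\frac{\sigma^2}{n}\Big) \] pointwise on $\mathcal{X}$. In particular, if $x\mapsto\sigma(x)^2/n_x$ is bounded, then for the invariant probability measure $\pi$, \[ \operatorname{Var}_\pi f\le\|f\|_{\mathrm{Lip}}^2\sup_{x\in\mathcal{X}}\frac{\sigma(x)^2}{n_x\kappa}. \]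
   Context: $W_1$ is the $L^1$ Wasserstein distance. $P^Nf(x):=\int f(y)P_x^N(dy)$, with $P^N_x$ the $N$-step kernel and $P^0$ the identity. $\frac{\sigma^2}{n}$ denotes the function $x\mapsto\sigma(x)^2/n_x$, where $\sigma(x)^2:=\frac12\iint d(y,z)^2P_x(dy)P_x(dz)$ and $n_x:=\inf\{\iint d(y,z)^2P_x(dy)P_x(dz)/\iint|g(y)-g(z)|^2P_x(dy)P_x(dz): g\ 1\text{-Lipschitz}\}$. $\|f\|_{\mathrm{Lip}}:=\sup_{x\ne y}|f(x)-f(y)|/d(x,y)$. *)

theory Defs
  imports "HOL-Probability.Probability"
begin

definition coupling :: "('a::metric_space \<times> 'a) measure \<Rightarrow> 'a measure \<Rightarrow> 'a measure \<Rightarrow> bool" where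
  "coupling \<gamma> \<mu> \<nu> \<longleftrightarrow> prob_space \<gamma> \<and> sets \<gamma> = sets (borel \<Otimes>\<^sub>M borel)
     \<and> distr \<gamma> borel fst = \<mu> \<and> distr \<gamma> borel snd = \<nu>"

definition W1 :: "'a::metric_space measure \<Rightarrow> 'a measure \<Rightarrow> real" where
  "W1 \<mu> \<nu> = enn2real (INF \<gamma>\<in>{\<gamma>. coupling \<gamma> \<mu> \<nu>}. \<integral>\<^sup>+ z. ennreal (dist (fst z) (snd z)) \<partial>\<gamma>)"

fun kpow :: "('a::metric_space \<Rightarrow> 'a measure) \<Rightarrow> nat \<Rightarrow> 'a \<Rightarrow> 'a measure" where
  "kpow P 0 x = return borel x"
| "kpow P (Suc n) x = Giry_Monad.bind (kpow P n x) P"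

definition sigma2 :: "('a::metric_space \<Rightarrow> 'a measure) \<Rightarrow> 'a \<Rightarrow> ennreal" where
  "sigma2 P x = (1/2) * (\<integral>\<^sup>+ y. \<integral>\<^sup>+ z. ennreal ((dist y z)^2) \<partial>P x \<partial>P x)"

definition nx :: "('a::metric_space \<Rightarrow> 'a measure) \<Rightarrow> 'a \<Rightarrow> ennreal" where
  "nx P x = (INF g\<in>{g::'a \<Rightarrow> real. 1-lipschitz_on UNIV g}.
      (\<integral>\<^sup>+ y. \<integral>\<^sup>+ z. ennreal ((dist y z)^2) \<partial>P x \<partial>P x)
      / (\<integral>\<^sup>+ y. \<integral>\<^sup>+ z. ennreal ((g y - g z)^2) \<partial>P x \<partial>P x))"

definition lip_norm :: "('a::metric_space \<Rightarrow> real) \<Rightarrow> real" where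
  "lip_norm f = (SUP p\<in>{p::'a\<times>'a. fst p \<noteq> snd p}. \<bar>f (fst p) - f (snd p)\<bar> / dist (fst p) (snd p))"

end

theory Submission
  imports Defs
begin

text \<open>
  The whole argument runs on the law of total variance for \<open>P\<^sup>N\<^sub>x = P\<^sup>N\<^sup>-\<^sup>1\<^sub>x \<bind> P\<close>: the variance of
  \<open>f\<close> is the mean of the one-step variances \<open>Var\<^bsub>P\<^sub>y\<^esub> f\<close> plus the variance of \<open>P f\<close>.
  If \<open>f\<close> is \<open>L\<close>-Lipschitz, then \<open>f/L\<close> is admissible in the infimum defining \<open>n\<^sub>y\<close>, which gives
  \<open>Var\<^bsub>P\<^sub>y\<^esub> f \<le> L\<^sup>2 \<sigma>(y)\<^sup>2/n\<^sub>y\<close>; and testing the contraction hypothesis against \<open>f\<close> on each coupling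
  (the easy half of Kantorovich duality) shows that \<open>P f\<close> is \<open>(1-\<kappa>)L\<close>-Lipschitz. For an invariant \<open>\<pi>\<close> the same splitting reads
  \<open>Var\<^sub>\<pi> f \<le> L\<^sup>2 S + Var\<^sub>\<pi> (P f)\<close>; iterating it, the remainder \<open>Var\<^sub>\<pi> (P\<^sup>n f)\<close> vanishes since
  \<open>P\<^sup>n f\<close> is \<open>(1-\<kappa>)\<^sup>nL\<close>-Lipschitz, and the geometric series \<open>1/(1-(1-\<kappa>)\<^sup>2)\<close> is at most \<open>1/\<kappa>\<close>.
  All of this is done for bounded \<open>f\<close>; unbounded Lipschitz functions are reached by truncation,
  using the variance in the form \<open>1/2 \<integral>\<integral>(f a - f b)\<^sup>2\<close>, which is monotone under truncation
  and meaningful without any integrability.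
\<close>

section \<open>Variance\<close>

definition var :: "'b measure \<Rightarrow> ('b \<Rightarrow> real) \<Rightarrow> real" where
  "var M f = (\<integral>x. (f x - (\<integral>z. f z \<partial>M))\<^sup>2 \<partial>M)"

text \<open>\<open>1/2 E(f X - f Y)\<^sup>2\<close> for independent \<open>X, Y \<sim> M\<close>: the variance, with values in \<open>[0, \<infinity>]\<close>.\<close>
definition nn_variance :: "'b measure \<Rightarrow> ('b \<Rightarrow> real) \<Rightarrow> ennreal" where
  "nn_variance M f = (1/2) * (\<integral>\<^sup>+a. \<integral>\<^sup>+b. ennreal ((f a - f b)\<^sup>2) \<partial>M \<partial>M)"

lemma half_double_ennreal: "(1/2::ennreal) * (2 * x) = x"
  by (simp add: ennreal_divide_times mult.commute[of 2 x] mult_divide_eq_ennreal)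

lemma double_half_ennreal: "2 * ((1/2::ennreal) * x) = x"
  by (simp add: ennreal_divide_times mult.commute[of 2] mult_divide_eq_ennreal)

lemma var_nonneg: "0 \<le> var M f"
  unfolding var_def by simp

lemma integrable_bounded:
  fixes f :: "'b \<Rightarrow> real"
  assumes "finite_measure M" "f \<in> borel_measurable M" "\<And>x. x \<in> space M \<Longrightarrow> \<bar>f x\<bar> \<le> B"
  shows "integrable M f" "integrable M (\<lambda>x. (f x)\<^sup>2)"
proof -
  interpret finite_measure M by fact
  show "integrable M f"
    using assms by (intro integrable_const_bound[where B=B] AE_I2) auto
  have "\<bar>f x\<bar>\<^sup>2 \<le> B\<^sup>2" if "x \<in> space M" for x
    using assms(3)[OF that] by (rule power_mono) simp
  then show "integrable M (\<lambda>x. (f x)\<^sup>2)"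
    using assms by (intro integrable_const_bound[where B="B\<^sup>2"] AE_I2) auto
qed

lemma integral_bounded:
  fixes f :: "'b \<Rightarrow> real"
  assumes "prob_space M" "f \<in> borel_measurable M" "\<And>x. x \<in> space M \<Longrightarrow> \<bar>f x\<bar> \<le> B"
  shows "\<bar>\<integral>x. f x \<partial>M\<bar> \<le> B"
proof -
  interpret prob_space M by fact
  have "\<bar>\<integral>x. f x \<partial>M\<bar> \<le> (\<integral>x. \<bar>f x\<bar> \<partial>M)"
    using integral_norm_bound[of M f] by simp
  also have "\<dots> \<le> (\<integral>x. B \<partial>M)"
    using assms integrable_bounded[OF finite_measure_axioms assms(2)]
    by (intro integral_mono integrable_abs) auto
  finally show ?thesis
    by (simp add: prob_space)
qed

lemma var_eq:
  assumes "prob_space M" "integrable M f" "integrable M (\<lambda>x. (f x)\<^sup>2)"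
  shows "var M f = (\<integral>x. (f x)\<^sup>2 \<partial>M) - (\<integral>x. f x \<partial>M)\<^sup>2"
  using prob_space.variance_eq[OF assms] by (simp add: var_def)

lemma integral_square_diff_const:
  assumes "prob_space M" "integrable M f" "integrable M (\<lambda>x. (f x)\<^sup>2)"
  shows "(\<integral>x. (c - f x)\<^sup>2 \<partial>M) = (c - (\<integral>x. f x \<partial>M))\<^sup>2 + var M f"
proof -
  interpret prob_space M by fact
  show ?thesis
    using assms by (simp add: var_eq power2_diff prob_space algebra_simps)
qed

lemma var_le_integral_square_diff:
  assumes "prob_space M" "integrable M f" "integrable M (\<lambda>x. (f x)\<^sup>2)"
  shows "var M f \<le> (\<integral>x. (f x - c)\<^sup>2 \<partial>M)"
  using integral_square_diff_const[OF assms, of c] by (simp add: power2_commute)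

lemma var_divide: "var M (\<lambda>x. f x / c) = var M f / c\<^sup>2"
  by (simp add: var_def diff_divide_distrib[symmetric] power_divide)

lemma nn_variance_eq_var:
  assumes "prob_space M" "f \<in> borel_measurable M" "integrable M (\<lambda>x. (f x)\<^sup>2)"
  shows "nn_variance M f = ennreal (var M f)"
proof -
  interpret prob_space M by fact
  have f: "integrable M f"
    using assms square_integrable_imp_integrable by blast
  define m where "m = (\<integral>x. f x \<partial>M)"
  have centered: "integrable M (\<lambda>a. (f a - m)\<^sup>2)"
    using f assms(3) by (simp add: power2_diff)
  have "(\<integral>\<^sup>+b. ennreal ((f a - f b)\<^sup>2) \<partial>M) = ennreal ((f a - m)\<^sup>2 + var M f)" for a
  proof -
    have "integrable M (\<lambda>b. (f a - f b)\<^sup>2)"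
      using f assms(3) by (simp add: power2_diff)
    then show ?thesis
      by (simp add: nn_integral_eq_integral integral_square_diff_const[OF assms(1) f assms(3)] m_def)
  qed
  then have "(\<integral>\<^sup>+a. \<integral>\<^sup>+b. ennreal ((f a - f b)\<^sup>2) \<partial>M \<partial>M)
      = (\<integral>\<^sup>+a. ennreal ((f a - m)\<^sup>2 + var M f) \<partial>M)"
    by simp
  also have "\<dots> = ennreal (\<integral>a. (f a - m)\<^sup>2 + var M f \<partial>M)"
    by (rule nn_integral_eq_integral) (use centered in \<open>auto simp: var_nonneg\<close>)
  also have "\<dots> = ennreal (2 * var M f)"
    using centered by (simp add: prob_space var_def m_def)
  finally show ?thesis
    by (simp add: nn_variance_def ennreal_mult' half_double_ennreal)
qed

lemma nn_variance_eq_top: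
  fixes f :: "'b \<Rightarrow> real"
  assumes "prob_space M" "f \<in> borel_measurable M" "(\<integral>\<^sup>+x. ennreal ((f x)\<^sup>2) \<partial>M) = \<infinity>"
  shows "nn_variance M f = \<infinity>"
proof -
  interpret prob_space M by fact
  have "(\<integral>\<^sup>+b. ennreal ((f a - f b)\<^sup>2) \<partial>M) = \<infinity>" for a
  proof -
    have "ennreal ((f b)\<^sup>2) \<le> 2 * ennreal ((f a - f b)\<^sup>2) + ennreal (2 * (f a)\<^sup>2)" for b
    proof -
      have "(f b)\<^sup>2 \<le> 2 * (f a - f b)\<^sup>2 + 2 * (f a)\<^sup>2"
        using zero_le_power2[of "2 * f a - f b"] by (simp add: power2_eq_square algebra_simps)
      then have "ennreal ((f b)\<^sup>2) \<le> ennreal (2 * (f a - f b)\<^sup>2 + 2 * (f a)\<^sup>2)"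
        by (rule ennreal_leI)
      then show ?thesis
        by (simp add: ennreal_plus ennreal_mult')
    qed
    then have "\<infinity> \<le> (\<integral>\<^sup>+b. 2 * ennreal ((f a - f b)\<^sup>2) + ennreal (2 * (f a)\<^sup>2) \<partial>M)"
      unfolding assms(3)[symmetric] by (rule nn_integral_mono)
    also have "\<dots> = 2 * (\<integral>\<^sup>+b. ennreal ((f a - f b)\<^sup>2) \<partial>M) + ennreal (2 * (f a)\<^sup>2)"
      using assms(2) by (simp add: nn_integral_add nn_integral_cmult emeasure_space_1)
    finally show ?thesis
      by (simp add: top_unique ennreal_mult_eq_top_iff)
  qed
  then show ?thesis
    by (simp add: nn_variance_def emeasure_space_1 ennreal_divide_times ennreal_top_divide)
qed

lemma nn_variance_cases:
  fixes f :: "'b \<Rightarrow> real"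
  assumes "prob_space M" "f \<in> borel_measurable M"
  obtains "nn_variance M f = \<infinity>" "(\<integral>\<^sup>+x. ennreal ((f x)\<^sup>2) \<partial>M) = \<infinity>"
  | "integrable M (\<lambda>x. (f x)\<^sup>2)" "nn_variance M f = ennreal (var M f)"
proof (cases "(\<integral>\<^sup>+x. ennreal ((f x)\<^sup>2) \<partial>M) = \<infinity>")
  case True
  then show ?thesis
    using that nn_variance_eq_top[OF assms] by blast
next
  case False
  then have "integrable M (\<lambda>x. (f x)\<^sup>2)"
    using assms(2) by (intro integrableI_bounded) (auto simp: top.not_eq_extremum)
  then show ?thesis
    using that nn_variance_eq_var[OF assms] by blast
qed

lemma nn_integral_centered_square_le_nn_variance:
  fixes f :: "'b \<Rightarrow> real"
  assumes "prob_space M" "f \<in> borel_measurable M"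
  shows "(\<integral>\<^sup>+x. ennreal ((f x - (\<integral>z. f z \<partial>M))\<^sup>2) \<partial>M) \<le> nn_variance M f"
  using assms
proof (cases rule: nn_variance_cases)
  case 2
  interpret prob_space M by fact
  have "integrable M f"
    using 2 assms square_integrable_imp_integrable by blast
  then have "integrable M (\<lambda>x. (f x - (\<integral>z. f z \<partial>M))\<^sup>2)"
    using 2 by (simp add: power2_diff)
  then show ?thesis
    using 2 by (simp add: nn_integral_eq_integral var_def)
qed simp

lemma second_moment_minus_square_mean_le_nn_variance:
  fixes f :: "'b \<Rightarrow> real"
  assumes "prob_space M" "f \<in> borel_measurable M"
  shows "enn2ereal (\<integral>\<^sup>+x. ennreal ((f x)\<^sup>2) \<partial>M) - ereal ((\<integral>x. f x \<partial>M)\<^sup>2)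
    \<le> enn2ereal (nn_variance M f)"
  using assms
proof (cases rule: nn_variance_cases)
  case 1
  then show ?thesis by simp
next
  case 2
  interpret prob_space M by fact
  have "integrable M f"
    using 2 assms square_integrable_imp_integrable by blast
  then show ?thesis
    using 2 assms var_nonneg[of M f]
    by (simp add: nn_integral_eq_integral var_eq enn2ereal_ennreal del: var_nonneg)
qed

section \<open>Truncation\<close>

definition clip :: "real \<Rightarrow> real \<Rightarrow> real" where
  "clip M t = max (-M) (min M t)"

lemma clip_eq: "\<bar>t\<bar> \<le> M \<Longrightarrow> clip M t = t"
  unfolding clip_def by auto

lemma abs_clip_le: "0 \<le> M \<Longrightarrow> \<bar>clip M t\<bar> \<le> M"
  unfolding clip_def by auto

lemma abs_clip_diff_le: "0 \<le> M \<Longrightarrow> \<bar>clip M s - clip M t\<bar> \<le> \<bar>s - t\<bar>"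
  unfolding clip_def by (auto simp: max_def min_def abs_if)

lemma abs_clip_diff_mono: "0 \<le> M \<Longrightarrow> M \<le> M' \<Longrightarrow> \<bar>clip M s - clip M t\<bar> \<le> \<bar>clip M' s - clip M' t\<bar>"
  unfolding clip_def by (auto simp: max_def min_def abs_if split: if_splits)

lemma borel_measurable_clip:
  "f \<in> borel_measurable M \<Longrightarrow> (\<lambda>x. clip c (f x)) \<in> borel_measurable M"
  unfolding clip_def by (intro borel_measurable_max borel_measurable_min borel_measurable_const)

lemma incseq_clip_diff_square: "incseq (\<lambda>n. ennreal ((clip (real n) s - clip (real n) t)\<^sup>2))"
  unfolding incseq_def by (intro allI impI ennreal_leI) (simp add: abs_le_square_iff[symmetric] abs_clip_diff_mono)

lemma SUP_clip_diff_square: "(SUP n. ennreal ((clip (real n) s - clip (real n) t)\<^sup>2)) = ennreal ((s - t)\<^sup>2)"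
proof (rule antisym)
  show "(SUP n. ennreal ((clip (real n) s - clip (real n) t)\<^sup>2)) \<le> ennreal ((s - t)\<^sup>2)"
    by (intro SUP_least ennreal_leI) (simp add: abs_le_square_iff[symmetric] abs_clip_diff_le)
  obtain n :: nat where "max \<bar>s\<bar> \<bar>t\<bar> \<le> real n"
    using real_arch_simple by blast
  then have "ennreal ((s - t)\<^sup>2) = ennreal ((clip (real n) s - clip (real n) t)\<^sup>2)"
    by (simp add: clip_eq)
  also have "\<dots> \<le> (SUP n. ennreal ((clip (real n) s - clip (real n) t)\<^sup>2))"
    by (rule SUP_upper) simp
  finally show "ennreal ((s - t)\<^sup>2) \<le> (SUP n. ennreal ((clip (real n) s - clip (real n) t)\<^sup>2))" .
qed

lemma nn_variance_eq_SUP_clip: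
  fixes f :: "'b \<Rightarrow> real"
  assumes "prob_space M" "f \<in> borel_measurable M"
  shows "nn_variance M f = (SUP n. nn_variance M (\<lambda>x. clip (real n) (f x)))"
proof -
  interpret prob_space M by fact
  define F where "F n a b = ennreal ((clip (real n) (f a) - clip (real n) (f b))\<^sup>2)" for n a b
  have inner_measurable: "(\<lambda>a. \<integral>\<^sup>+b. F n a b \<partial>M) \<in> borel_measurable M" for n
  proof -
    have "(\<lambda>(a, b). F n a b) \<in> borel_measurable (M \<Otimes>\<^sub>M M)"
      unfolding F_def case_prod_beta
      by (intro measurable_compose[OF _ measurable_ennreal] borel_measurable_power borel_measurable_diff
          borel_measurable_clip measurable_compose[OF measurable_fst] measurable_compose[OF measurable_snd] assms)
    then show ?thesis
      using borel_measurable_nn_integral_fst by fastforce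
  qed
  have F_mono: "F m a b \<le> F n a b" if "m \<le> n" for m n a b
    using incseq_clip_diff_square that unfolding F_def incseq_def by blast
  have F_measurable: "(\<lambda>b. F n a b) \<in> borel_measurable M" for n a
    unfolding F_def
    by (intro measurable_compose[OF _ measurable_ennreal] borel_measurable_power borel_measurable_diff
        borel_measurable_clip borel_measurable_const assms)
  have "(\<integral>\<^sup>+b. ennreal ((f a - f b)\<^sup>2) \<partial>M) = (SUP n. \<integral>\<^sup>+b. F n a b \<partial>M)" for a
  proof -
    have "(\<integral>\<^sup>+b. ennreal ((f a - f b)\<^sup>2) \<partial>M) = (\<integral>\<^sup>+b. (SUP n. F n a b) \<partial>M)"
      unfolding F_def SUP_clip_diff_square ..
    also have "\<dots> = (SUP n. \<integral>\<^sup>+b. F n a b \<partial>M)"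
      by (rule nn_integral_monotone_convergence_SUP[OF _ F_measurable]) (simp add: incseq_def le_fun_def F_mono)
    finally show ?thesis .
  qed
  then have "(\<integral>\<^sup>+a. \<integral>\<^sup>+b. ennreal ((f a - f b)\<^sup>2) \<partial>M \<partial>M) = (\<integral>\<^sup>+a. (SUP n. \<integral>\<^sup>+b. F n a b \<partial>M) \<partial>M)"
    by simp
  also have "\<dots> = (SUP n. \<integral>\<^sup>+a. \<integral>\<^sup>+b. F n a b \<partial>M \<partial>M)"
    by (rule nn_integral_monotone_convergence_SUP[OF _ inner_measurable])
      (use F_mono in \<open>auto simp: incseq_def le_fun_def intro!: nn_integral_mono\<close>)
  finally show ?thesis
    unfolding nn_variance_def F_def by (simp only: SUP_mult_left_ennreal)
qed

section \<open>Lipschitz functions and the Wasserstein distance\<close>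

lemma lipschitz_on_borel_measurable:
  fixes f :: "'a::metric_space \<Rightarrow> real"
  shows "C-lipschitz_on UNIV f \<Longrightarrow> f \<in> borel_measurable borel"
  by (rule borel_measurable_continuous_onI[OF lipschitz_on_continuous_on])

lemma lipschitz_on_clip:
  fixes f :: "'a::metric_space \<Rightarrow> real"
  assumes "L-lipschitz_on UNIV f" "0 \<le> c"
  shows "L-lipschitz_on UNIV (\<lambda>x. clip c (f x))"
proof (rule lipschitz_onI)
  fix a b :: 'a
  have "\<bar>clip c (f a) - clip c (f b)\<bar> \<le> \<bar>f a - f b\<bar>"
    using assms(2) by (rule abs_clip_diff_le)
  also have "\<dots> \<le> L * dist a b"
    using lipschitz_onD[OF assms(1)] by (simp add: dist_real_def)
  finally show "dist (clip c (f a)) (clip c (f b)) \<le> L * dist a b"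
    by (simp add: dist_real_def)
qed (use assms(1) lipschitz_on_nonneg in blast)

text \<open>On a one-point space the supremum defining \<open>lip_norm\<close> is taken over the empty set, hence \<open>max 0\<close>.\<close>
lemma lipschitz_on_lip_norm:
  fixes f :: "'a::metric_space \<Rightarrow> real"
  assumes "C-lipschitz_on UNIV f"
  shows "(max 0 (lip_norm f))-lipschitz_on UNIV f"
proof (rule lipschitz_onI)
  fix a b :: 'a
  define r where "r p = \<bar>f (fst p) - f (snd p)\<bar> / dist (fst p) (snd p)" for p :: "'a \<times> 'a"
  have "bdd_above (r ` {p. fst p \<noteq> snd p})"
  proof (rule bdd_aboveI2)
    fix p :: "'a \<times> 'a"
    assume "p \<in> {p. fst p \<noteq> snd p}"
    then show "r p \<le> C"
      using lipschitz_onD[OF assms, of "fst p" "snd p"] by (simp add: r_def dist_real_def divide_le_eq)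
  qed
  then have "a \<noteq> b \<Longrightarrow> r (a, b) \<le> lip_norm f"
    unfolding lip_norm_def r_def[symmetric] by (intro cSUP_upper) auto
  then show "dist (f a) (f b) \<le> max 0 (lip_norm f) * dist a b"
    by (cases "a = b") (auto simp: r_def dist_real_def divide_le_eq mult.commute intro: order_trans)
qed simp

lemma var_eq_0_if_lipschitz_0:
  assumes "prob_space M" "0-lipschitz_on UNIV h"
  shows "var M h = 0"
proof -
  interpret prob_space M by fact
  have "h x = h y" for x y
    using lipschitz_onD[OF assms(2), of x y] by simp
  then obtain c where "h = (\<lambda>_. c)"
    by blast
  then show ?thesis
    by (simp add: var_def prob_space)
qed

lemma nn_variance_lipschitz_le:
  fixes f :: "'a::metric_space \<Rightarrow> real"
  assumes "prob_space M" "sets M = sets borel" "L-lipschitz_on UNIV f"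
    and bounded_case: "\<And>g B. (\<And>x. \<bar>g x\<bar> \<le> B) \<Longrightarrow> L-lipschitz_on UNIV g \<Longrightarrow> ennreal (var M g) \<le> R"
  shows "nn_variance M f \<le> R"
proof -
  interpret prob_space M by fact
  have measurable: "g \<in> borel_measurable M" if "C-lipschitz_on UNIV g" for g :: "'a \<Rightarrow> real" and C
    using lipschitz_on_borel_measurable[OF that] measurable_cong_sets[OF assms(2) refl] by blast
  have "nn_variance M (\<lambda>x. clip (real n) (f x)) \<le> R" for n
  proof -
    have lip: "L-lipschitz_on UNIV (\<lambda>x. clip (real n) (f x))"
      using assms(3) by (rule lipschitz_on_clip) simp
    have bounded: "\<bar>clip (real n) (f x)\<bar> \<le> real n" for x
      by (rule abs_clip_le) simp
    have "nn_variance M (\<lambda>x. clip (real n) (f x)) = ennreal (var M (\<lambda>x. clip (real n) (f x)))"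
      using measurable[OF lip] integrable_bounded(2)[OF finite_measure_axioms measurable[OF lip] bounded]
      by (intro nn_variance_eq_var) (simp_all add: prob_space_axioms)
    also have "\<dots> \<le> R"
      using bounded lip by (rule bounded_case)
    finally show ?thesis .
  qed
  then show ?thesis
    using nn_variance_eq_SUP_clip[OF assms(1) measurable[OF assms(3)]] by (simp add: SUP_least)
qed

lemma coupling_pair_measure:
  fixes \<mu> \<nu> :: "'a::metric_space measure"
  assumes "prob_space \<mu>" "sets \<mu> = sets borel" "prob_space \<nu>" "sets \<nu> = sets borel"
  shows "coupling (\<mu> \<Otimes>\<^sub>M \<nu>) \<mu> \<nu>"
proof -
  interpret \<mu>: prob_space \<mu> by fact
  interpret \<nu>: prob_space \<nu> by fact
  interpret pair_prob_space \<mu> \<nu> ..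
  have "distr (\<mu> \<Otimes>\<^sub>M \<nu>) borel fst = distr (\<mu> \<Otimes>\<^sub>M \<nu>) \<mu> fst"
    using assms(2) by (intro distr_cong) simp_all
  moreover have "distr (\<mu> \<Otimes>\<^sub>M \<nu>) borel snd = distr (\<nu> \<Otimes>\<^sub>M \<mu>) \<nu> fst"
    using assms(4) by (subst distr_pair_swap) (simp add: distr_distr comp_def case_prod_beta cong: distr_cong)
  ultimately show ?thesis
    unfolding coupling_def using sets_pair_measure_cong[OF assms(2,4)]
    by (simp add: prob_space_axioms \<nu>.distr_pair_fst \<mu>.distr_pair_fst)
qed

lemma abs_integral_diff_le_coupling_cost:
  fixes h :: "'a::{second_countable_topology, metric_space} \<Rightarrow> real"
  assumes "coupling \<gamma> \<mu> \<nu>" "\<And>x. \<bar>h x\<bar> \<le> B" "L-lipschitz_on UNIV h"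
  shows "ennreal \<bar>(\<integral>x. h x \<partial>\<mu>) - (\<integral>x. h x \<partial>\<nu>)\<bar> \<le> ennreal L * (\<integral>\<^sup>+z. ennreal (dist (fst z) (snd z)) \<partial>\<gamma>)"
proof -
  have "prob_space \<gamma>" and sets: "sets \<gamma> = sets (borel \<Otimes>\<^sub>M borel)"
    and marginals: "distr \<gamma> borel fst = \<mu>" "distr \<gamma> borel snd = \<nu>"
    using assms(1) by (auto simp: coupling_def)
  interpret prob_space \<gamma> by fact
  have [measurable]: "fst \<in> \<gamma> \<rightarrow>\<^sub>M borel" "snd \<in> \<gamma> \<rightarrow>\<^sub>M borel" "h \<in> borel_measurable borel"
    using lipschitz_on_borel_measurable[OF assms(3)] by (simp_all add: measurable_cong_sets[OF sets refl])
  have integrable: "integrable \<gamma> (\<lambda>z. h (fst z))" "integrable \<gamma> (\<lambda>z. h (snd z))"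
    using assms(2) by (auto intro!: integrable_bounded(1)[OF finite_measure_axioms, where B=B])
  have "(\<integral>x. h x \<partial>\<mu>) - (\<integral>x. h x \<partial>\<nu>) = (\<integral>z. h (fst z) - h (snd z) \<partial>\<gamma>)"
    unfolding marginals[symmetric] using integrable by (simp add: integral_distr)
  then have "\<bar>(\<integral>x. h x \<partial>\<mu>) - (\<integral>x. h x \<partial>\<nu>)\<bar> \<le> (\<integral>z. \<bar>h (fst z) - h (snd z)\<bar> \<partial>\<gamma>)"
    using integral_norm_bound[of \<gamma> "\<lambda>z. h (fst z) - h (snd z)"] by simp
  then have "ennreal \<bar>(\<integral>x. h x \<partial>\<mu>) - (\<integral>x. h x \<partial>\<nu>)\<bar> \<le> (\<integral>\<^sup>+z. ennreal \<bar>h (fst z) - h (snd z)\<bar> \<partial>\<gamma>)"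
    using integrable by (simp add: nn_integral_eq_integral ennreal_leI)
  also have "\<dots> \<le> (\<integral>\<^sup>+z. ennreal L * ennreal (dist (fst z) (snd z)) \<partial>\<gamma>)"
    using lipschitz_onD[OF assms(3)] lipschitz_on_nonneg[OF assms(3)]
    by (intro nn_integral_mono) (simp add: dist_real_def ennreal_mult[symmetric] ennreal_leI)
  also have "\<dots> = ennreal L * (\<integral>\<^sup>+z. ennreal (dist (fst z) (snd z)) \<partial>\<gamma>)"
    by (rule nn_integral_cmult) measurable
  finally show ?thesis .
qed

lemma nn_integral_dist_pair_measure_finite:
  fixes \<mu> \<nu> :: "'a::{second_countable_topology, metric_space} measure"
  assumes "prob_space \<mu>" "sets \<mu> = sets borel" "prob_space \<nu>" "sets \<nu> = sets borel"
    and "(\<integral>\<^sup>+y. ennreal (dist x y) \<partial>\<mu>) < \<infinity>" "(\<integral>\<^sup>+y. ennreal (dist x' y) \<partial>\<nu>) < \<infinity>"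
  shows "(\<integral>\<^sup>+z. ennreal (dist (fst z) (snd z)) \<partial>(\<mu> \<Otimes>\<^sub>M \<nu>)) < \<infinity>"
proof -
  interpret \<mu>: prob_space \<mu> by fact
  interpret \<nu>: prob_space \<nu> by fact
  interpret pair_prob_space \<mu> \<nu> ..
  have sets: "sets (\<mu> \<Otimes>\<^sub>M \<nu>) = sets (borel \<Otimes>\<^sub>M borel)"
    by (rule sets_pair_measure_cong[OF assms(2,4)])
  have [measurable]: "fst \<in> (\<mu> \<Otimes>\<^sub>M \<nu>) \<rightarrow>\<^sub>M borel" "snd \<in> (\<mu> \<Otimes>\<^sub>M \<nu>) \<rightarrow>\<^sub>M borel"
    by (simp_all add: measurable_cong_sets[OF sets refl])
  have [measurable]: "(\<lambda>y. dist c y) \<in> borel_measurable borel" for c :: 'a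
    by measurable
  have first: "(\<integral>\<^sup>+z. ennreal (dist x (fst z)) \<partial>(\<mu> \<Otimes>\<^sub>M \<nu>)) = (\<integral>\<^sup>+y. ennreal (dist x y) \<partial>\<mu>)"
    using nn_integral_distr[of fst "\<mu> \<Otimes>\<^sub>M \<nu>" borel "\<lambda>y. ennreal (dist x y)"]
    by (simp add: coupling_pair_measure[OF assms(1-4), unfolded coupling_def] measurable_cong_sets[OF assms(2) refl])
  have second: "(\<integral>\<^sup>+z. ennreal (dist x' (snd z)) \<partial>(\<mu> \<Otimes>\<^sub>M \<nu>)) = (\<integral>\<^sup>+y. ennreal (dist x' y) \<partial>\<nu>)"
    using nn_integral_distr[of snd "\<mu> \<Otimes>\<^sub>M \<nu>" borel "\<lambda>y. ennreal (dist x' y)"]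
    by (simp add: coupling_pair_measure[OF assms(1-4), unfolded coupling_def] measurable_cong_sets[OF assms(4) refl])
  have "(\<integral>\<^sup>+z. ennreal (dist (fst z) (snd z)) \<partial>(\<mu> \<Otimes>\<^sub>M \<nu>))
      \<le> (\<integral>\<^sup>+z. ennreal (dist x (fst z)) + ennreal (dist x x') + ennreal (dist x' (snd z)) \<partial>(\<mu> \<Otimes>\<^sub>M \<nu>))"
  proof (rule nn_integral_mono)
    fix z :: "'a \<times> 'a"
    have "dist (fst z) (snd z) \<le> dist x (fst z) + dist x x' + dist x' (snd z)"
      by (metis add.commute dist_commute dist_triangle dist_triangle3 order_trans add_right_mono)
    then show "ennreal (dist (fst z) (snd z)) \<le> ennreal (dist x (fst z)) + ennreal (dist x x') + ennreal (dist x' (snd z))"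
      by (simp add: ennreal_plus[symmetric] ennreal_leI del: ennreal_plus)
  qed
  also have "\<dots> = (\<integral>\<^sup>+y. ennreal (dist x y) \<partial>\<mu>) + ennreal (dist x x') + (\<integral>\<^sup>+y. ennreal (dist x' y) \<partial>\<nu>)"
    by (simp add: nn_integral_add prob_space.emeasure_space_1[OF prob_space_axioms] first second)
  also have "\<dots> < \<infinity>"
    using assms(5,6) by (simp add: less_top)
  finally show ?thesis .
qed

lemma abs_integral_diff_le_W1:
  fixes h :: "'a::{second_countable_topology, metric_space} \<Rightarrow> real"
  assumes "prob_space \<mu>" "sets \<mu> = sets borel" "prob_space \<nu>" "sets \<nu> = sets borel"
    and "(\<integral>\<^sup>+y. ennreal (dist x y) \<partial>\<mu>) < \<infinity>" "(\<integral>\<^sup>+y. ennreal (dist x' y) \<partial>\<nu>) < \<infinity>"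
    and "\<And>x. \<bar>h x\<bar> \<le> B" "L-lipschitz_on UNIV h"
  shows "\<bar>(\<integral>x. h x \<partial>\<mu>) - (\<integral>x. h x \<partial>\<nu>)\<bar> \<le> L * W1 \<mu> \<nu>"
proof -
  define cost where "cost \<gamma> = (\<integral>\<^sup>+z. ennreal (dist (fst z) (snd z)) \<partial>\<gamma>)" for \<gamma> :: "('a \<times> 'a) measure"
  define I where "I = (INF \<gamma>\<in>{\<gamma>. coupling \<gamma> \<mu> \<nu>}. cost \<gamma>)"
  \<comment> \<open>\<open>W1\<close> is \<open>enn2real\<close> of \<open>I\<close>, hence \<open>0\<close> if \<open>I = \<infinity>\<close>; the product coupling rules this out.\<close>
  have "I \<le> cost (\<mu> \<Otimes>\<^sub>M \<nu>)"
    unfolding I_def using coupling_pair_measure[OF assms(1-4)] by (intro INF_lower) simp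
  also have "\<dots> < \<infinity>"
    unfolding cost_def by (rule nn_integral_dist_pair_measure_finite[OF assms(1-6)])
  finally have W1: "ennreal (W1 \<mu> \<nu>) = I"
    by (simp add: W1_def cost_def[symmetric] I_def[symmetric])
  define \<Delta> where "\<Delta> = \<bar>(\<integral>x. h x \<partial>\<mu>) - (\<integral>x. h x \<partial>\<nu>)\<bar>"
  have per_coupling: "ennreal \<Delta> \<le> ennreal L * cost \<gamma>" if "coupling \<gamma> \<mu> \<nu>" for \<gamma>
    unfolding \<Delta>_def cost_def using that assms(7,8) by (rule abs_integral_diff_le_coupling_cost)
  show ?thesis
  proof (cases "L = 0")
    case True
    then show ?thesis
      using per_coupling[OF coupling_pair_measure[OF assms(1-4)]] by (simp add: \<Delta>_def)
  next
    case False
    then have L: "0 < L"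
      using lipschitz_on_nonneg[OF assms(8)] by simp
    have "ennreal (\<Delta> / L) \<le> cost \<gamma>" if "coupling \<gamma> \<mu> \<nu>" for \<gamma>
    proof -
      have "ennreal (\<Delta> / L) = ennreal \<Delta> / ennreal L"
        using L by (simp add: \<Delta>_def divide_ennreal)
      also have "\<dots> \<le> cost \<gamma> * ennreal L / ennreal L"
        using per_coupling[OF that] by (intro divide_right_mono_ennreal) (simp add: mult.commute)
      also have "\<dots> = cost \<gamma>"
        using L by (simp add: mult_divide_eq_ennreal)
      finally show ?thesis .
    qed
    then have "ennreal (\<Delta> / L) \<le> ennreal (W1 \<mu> \<nu>)"
      unfolding W1 I_def by (intro INF_greatest) simp
    then have "\<Delta> / L \<le> W1 \<mu> \<nu>"
      by (simp add: W1_def enn2real_nonneg ennreal_le_iff)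
    then show ?thesis
      using L by (simp add: \<Delta>_def divide_le_eq mult.commute)
  qed
qed

section \<open>The one-step bound by \<open>\<sigma>\<^sup>2/n\<close>\<close>

lemma nn_variance_le_sigma2:
  fixes g :: "'a::metric_space \<Rightarrow> real"
  assumes "1-lipschitz_on UNIV g"
  shows "nn_variance (P y) g \<le> sigma2 P y"
proof -
  have "(g a - g b)\<^sup>2 \<le> (dist a b)\<^sup>2" for a b
    using lipschitz_onD[OF assms, of a b] by (simp add: dist_real_def abs_le_square_iff[symmetric])
  then show ?thesis
    unfolding nn_variance_def sigma2_def by (intro mult_left_mono nn_integral_mono ennreal_leI) auto
qed

lemma nx_le_sigma2_divide:
  fixes g :: "'a::metric_space \<Rightarrow> real"
  assumes "1-lipschitz_on UNIV g"
  shows "nx P y \<le> sigma2 P y / nn_variance (P y) g"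
proof -
  have "nx P y \<le> (\<integral>\<^sup>+a. \<integral>\<^sup>+b. ennreal ((dist a b)\<^sup>2) \<partial>P y \<partial>P y) / (\<integral>\<^sup>+a. \<integral>\<^sup>+b. ennreal ((g a - g b)\<^sup>2) \<partial>P y \<partial>P y)"
    unfolding nx_def using assms by (intro INF_lower) simp
  also have "\<dots> = sigma2 P y * 2 / (nn_variance (P y) g * 2)"
    by (simp add: sigma2_def nn_variance_def mult.commute[of _ 2] double_half_ennreal)
  also have "\<dots> = sigma2 P y / nn_variance (P y) g"
    by (rule divide_mult_eq) simp_all
  finally show ?thesis .
qed

lemma dist_square_le: "(dist a b)\<^sup>2 \<le> 2 * (dist c a)\<^sup>2 + 2 * (dist c b)\<^sup>2"
proof -
  have "(dist a b)\<^sup>2 \<le> (dist c a + dist c b)\<^sup>2"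
    by (intro power_mono) (auto intro: dist_triangle3)
  also have "\<dots> \<le> 2 * (dist c a)\<^sup>2 + 2 * (dist c b)\<^sup>2"
    using zero_le_power2[of "dist c a - dist c b"] by (simp add: power2_eq_square algebra_simps)
  finally show ?thesis .
qed

lemma nx_eq_zero_if_sigma2_eq_top:
  fixes P :: "'a::metric_space \<Rightarrow> 'a measure"
  assumes "prob_space (P y)" "sets (P y) = sets borel" "sigma2 P y = \<infinity>"
  shows "nx P y = 0"
proof -
  interpret prob_space "P y" by fact
  have dist_measurable: "(\<lambda>a. dist y a) \<in> borel_measurable (P y)"
    unfolding measurable_cong_sets[OF assms(2) refl]
    by (intro borel_measurable_continuous_onI continuous_intros)
  define A where "A = (\<integral>\<^sup>+a. \<integral>\<^sup>+b. ennreal ((dist a b)\<^sup>2) \<partial>P y \<partial>P y)"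
  have A: "A = \<infinity>"
    using assms(3) by (simp add: sigma2_def A_def ennreal_mult_eq_top_iff ennreal_divide_eq_top_iff)
  \<comment> \<open>The witness for \<open>n\<^sub>y = 0\<close> is the 1-Lipschitz function \<open>dist y\<close>.\<close>
  have "(\<integral>\<^sup>+a. ennreal ((dist y a)\<^sup>2) \<partial>P y) = \<infinity>"
  proof (rule ccontr)
    define I where "I = (\<integral>\<^sup>+a. ennreal ((dist y a)\<^sup>2) \<partial>P y)"
    assume "I \<noteq> \<infinity>"
    have "ennreal ((dist a b)\<^sup>2) \<le> 2 * ennreal ((dist y a)\<^sup>2) + 2 * ennreal ((dist y b)\<^sup>2)" for a b
    proof -
      have "ennreal ((dist a b)\<^sup>2) \<le> ennreal (2 * (dist y a)\<^sup>2 + 2 * (dist y b)\<^sup>2)"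
        by (intro ennreal_leI dist_square_le)
      then show ?thesis
        by (simp add: ennreal_plus ennreal_mult')
    qed
    then have "A \<le> (\<integral>\<^sup>+a. \<integral>\<^sup>+b. 2 * ennreal ((dist y a)\<^sup>2) + 2 * ennreal ((dist y b)\<^sup>2) \<partial>P y \<partial>P y)"
      unfolding A_def by (intro nn_integral_mono)
    also have "\<dots> = 2 * I + 2 * I"
      using dist_measurable by (simp add: I_def nn_integral_add nn_integral_cmult emeasure_space_1)
    also have "\<dots> < \<infinity>"
      using \<open>I \<noteq> \<infinity>\<close> by (simp add: less_top[symmetric] ennreal_mult_eq_top_iff)
    finally show False
      using A by simp
  qed
  then have "nn_variance (P y) (\<lambda>a. dist y a) = \<infinity>"
    by (rule nn_variance_eq_top[OF assms(1) dist_measurable])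
  then have "(\<integral>\<^sup>+a. \<integral>\<^sup>+b. ennreal ((dist y a - dist y b)\<^sup>2) \<partial>P y \<partial>P y) = \<infinity>"
    by (simp add: nn_variance_def ennreal_mult_eq_top_iff ennreal_divide_eq_top_iff)
  moreover have "1-lipschitz_on UNIV (\<lambda>a. dist y a)"
    by (intro lipschitz_onI) (metis abs_dist_diff_le dist_commute dist_real_def mult_1, simp)
  ultimately have "nx P y \<le> A / \<infinity>"
    unfolding nx_def A_def by (intro INF_lower2[of "\<lambda>a. dist y a"]) simp_all
  then show ?thesis
    by simp
qed

lemma var_le_sigma2_divide_nx:
  fixes P :: "'a::metric_space \<Rightarrow> 'a measure" and g :: "'a \<Rightarrow> real"
  assumes "prob_space (P y)" "sets (P y) = sets borel"
    and "integrable (P y) (\<lambda>x. (g x)\<^sup>2)" "1-lipschitz_on UNIV g"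
  shows "ennreal (var (P y) g) \<le> sigma2 P y / nx P y"
proof -
  define v where "v = var (P y) g"
  have "nn_variance (P y) g = ennreal v"
    unfolding v_def using assms(3) lipschitz_on_borel_measurable[OF assms(4)]
    by (intro nn_variance_eq_var[OF assms(1)]) (simp_all add: measurable_cong_sets[OF assms(2) refl])
  then have v_le_sigma2: "ennreal v \<le> sigma2 P y" and nx_le: "nx P y \<le> sigma2 P y / ennreal v"
    using nn_variance_le_sigma2[OF assms(4)] nx_le_sigma2_divide[OF assms(4)] by metis+
  show ?thesis
  proof (cases "v = 0")
    case False
    then have v: "0 < v"
      using var_nonneg[of "P y" g] by (simp add: v_def)
    show ?thesis
    proof (cases "sigma2 P y")
      case (real s)
      then have s: "v \<le> s"
        using v_le_sigma2 v by (auto simp: ennreal_le_iff2)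
      have "nx P y \<le> ennreal (s / v)"
        using nx_le real v by (simp add: divide_ennreal)
      then obtain n where n: "nx P y = ennreal n" "0 \<le> n" "n \<le> s / v"
        using s v by (cases "nx P y") (auto simp: top_unique)
      show ?thesis
      proof (cases "n = 0")
        case False
        then have "v \<le> s / n"
          using n s v by (simp add: field_simps)
        then show ?thesis
          using n False real by (simp add: v_def divide_ennreal ennreal_leI)
      qed (use real n s v in simp)
    next
      case top
      then show ?thesis
        using nx_eq_zero_if_sigma2_eq_top[of P y] assms(1,2) v by (simp add: v_def)
    qed
  qed (simp add: v_def)
qed

section \<open>Markov kernels\<close>

definition markov_op :: "('a \<Rightarrow> 'b measure) \<Rightarrow> ('b \<Rightarrow> real) \<Rightarrow> 'a \<Rightarrow> real" where
  "markov_op P h x = (\<integral>y. h y \<partial>P x)"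

lemma borel_measurable_markov_op:
  assumes "P \<in> M \<rightarrow>\<^sub>M subprob_algebra N" "h \<in> borel_measurable N"
  shows "markov_op P h \<in> borel_measurable M"
  unfolding markov_op_def[abs_def]
  by (rule measurable_compose[OF assms(1) integral_measurable_subprob_algebra[OF assms(2)]])

lemma abs_markov_op_le:
  assumes "P \<in> M \<rightarrow>\<^sub>M prob_algebra N" "h \<in> borel_measurable N" "\<And>y. \<bar>h y\<bar> \<le> B" "x \<in> space M"
  shows "\<bar>markov_op P h x\<bar> \<le> B"
proof -
  have "prob_space (P x)" "sets (P x) = sets N"
    using measurable_space[OF assms(1,4)] by (simp_all add: space_prob_algebra)
  then show ?thesis
    unfolding markov_op_def using assms(2,3)
    by (intro integral_bounded) (simp_all add: measurable_cong_sets[of "P x" N])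
qed

lemma var_eq_markov_op:
  fixes h :: "'b \<Rightarrow> real"
  assumes "P \<in> M \<rightarrow>\<^sub>M prob_algebra N" "h \<in> borel_measurable N" "\<And>y. \<bar>h y\<bar> \<le> B" "x \<in> space M"
  shows "var (P x) h = markov_op P (\<lambda>y. (h y)\<^sup>2) x - (markov_op P h x)\<^sup>2"
proof -
  have "prob_space (P x)" "sets (P x) = sets N"
    using measurable_space[OF assms(1,4)] by (simp_all add: space_prob_algebra)
  then show ?thesis
    using assms(2,3)
    by (auto simp: markov_op_def measurable_cong_sets[of "P x" N] intro!: var_eq
        integrable_bounded[OF prob_space.finite_measure, where B=B])
qed

lemma borel_measurable_var_kernel:
  fixes h :: "'b \<Rightarrow> real"
  assumes "P \<in> M \<rightarrow>\<^sub>M prob_algebra N" "h \<in> borel_measurable N" "\<And>y. \<bar>h y\<bar> \<le> B"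
  shows "(\<lambda>x. var (P x) h) \<in> borel_measurable M"
proof -
  have "(\<lambda>x. markov_op P (\<lambda>y. (h y)\<^sup>2) x - (markov_op P h x)\<^sup>2) \<in> borel_measurable M"
    using measurable_prob_algebraD[OF assms(1)] assms(2)
    by (intro borel_measurable_diff borel_measurable_power borel_measurable_markov_op) measurable
  then show ?thesis
    using var_eq_markov_op[OF assms] by (subst measurable_cong) auto
qed

lemma var_bind:
  fixes h :: "'b \<Rightarrow> real"
  assumes "prob_space \<mu>" "sets \<mu> = sets M" "P \<in> M \<rightarrow>\<^sub>M prob_algebra N"
    and "h \<in> borel_measurable N" "\<And>y. \<bar>h y\<bar> \<le> B"
  shows "var (\<mu> \<bind> P) h = (\<integral>x. var (P x) h \<partial>\<mu>) + var \<mu> (markov_op P h)"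
proof -
  interpret prob_space \<mu> by fact
  have kernel: "P \<in> \<mu> \<rightarrow>\<^sub>M subprob_algebra N"
    using measurable_prob_algebraD[OF assms(3)] by (simp add: measurable_cong_sets[OF assms(2) refl])
  have P: "prob_space (P x)" "sets (P x) = sets N" if "x \<in> space \<mu>" for x
    using measurable_space[OF assms(3), of x] that sets_eq_imp_space_eq[OF assms(2)]
    by (simp_all add: space_prob_algebra)
  have square_measurable: "(\<lambda>y. (h y)\<^sup>2) \<in> borel_measurable N"
    using assms(4) by measurable
  have square_bounded: "\<bar>(h y)\<^sup>2\<bar> \<le> B\<^sup>2" for y
    using power_mono[OF assms(5) abs_ge_zero, of y 2] by simp
  have bind_prob: "prob_space (\<mu> \<bind> P)" and bind_sets: "sets (\<mu> \<bind> P) = sets N"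
    using assms(2,3) by (auto intro!: prob_space_bind' sets_bind' simp: space_prob_algebra prob_space_axioms)
  note integrable_N = integrable_bounded[OF prob_space.finite_measure[OF bind_prob], where B=B]
  have integral_bind_h: "(\<integral>y. h y \<partial>(\<mu> \<bind> P)) = (\<integral>x. markov_op P h x \<partial>\<mu>)"
    and integral_bind_square: "(\<integral>y. (h y)\<^sup>2 \<partial>(\<mu> \<bind> P)) = (\<integral>x. markov_op P (\<lambda>y. (h y)\<^sup>2) x \<partial>\<mu>)"
    using assms(5) square_bounded P
    by (auto simp: markov_op_def prob_space.emeasure_space_1
        intro!: integral_bind[OF assms(4) _ kernel] integral_bind[OF square_measurable _ kernel])
  have Ph: "markov_op P h \<in> borel_measurable \<mu>" "\<And>x. x \<in> space \<mu> \<Longrightarrow> \<bar>markov_op P h x\<bar> \<le> B"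
    using borel_measurable_markov_op[OF kernel assms(4)] abs_markov_op_le[OF assms(3,4,5)]
      sets_eq_imp_space_eq[OF assms(2)] by auto
  have Ph2: "markov_op P (\<lambda>y. (h y)\<^sup>2) \<in> borel_measurable \<mu>"
    "\<And>x. x \<in> space \<mu> \<Longrightarrow> \<bar>markov_op P (\<lambda>y. (h y)\<^sup>2) x\<bar> \<le> B\<^sup>2"
    using borel_measurable_markov_op[OF kernel square_measurable]
      abs_markov_op_le[OF assms(3) square_measurable square_bounded] sets_eq_imp_space_eq[OF assms(2)] by auto
  have var_P: "var (P x) h = markov_op P (\<lambda>y. (h y)\<^sup>2) x - (markov_op P h x)\<^sup>2" if "x \<in> space \<mu>" for x
    using var_eq_markov_op[OF assms(3-5)] that sets_eq_imp_space_eq[OF assms(2)] by simp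
  have "(\<integral>x. var (P x) h \<partial>\<mu>) = (\<integral>x. markov_op P (\<lambda>y. (h y)\<^sup>2) x - (markov_op P h x)\<^sup>2 \<partial>\<mu>)"
    using var_P by (rule Bochner_Integration.integral_cong[OF refl])
  also have "\<dots> = (\<integral>x. markov_op P (\<lambda>y. (h y)\<^sup>2) x \<partial>\<mu>) - (\<integral>x. (markov_op P h x)\<^sup>2 \<partial>\<mu>)"
    using integrable_bounded[OF finite_measure_axioms Ph] integrable_bounded(1)[OF finite_measure_axioms Ph2]
    by (intro Bochner_Integration.integral_diff)
  finally show ?thesis
    using integrable_bounded[OF finite_measure_axioms Ph] assms(4,5) bind_sets
    by (simp add: var_eq[OF bind_prob] var_eq[OF prob_space_axioms] integral_bind_h integral_bind_square
        integrable_N measurable_cong_sets[OF bind_sets refl])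
qed

lemma kpow_in_space_prob_algebra:
  assumes "P \<in> borel \<rightarrow>\<^sub>M prob_algebra borel"
  shows "kpow P n x \<in> space (prob_algebra borel)"
proof (induction n)
  case (Suc n)
  then show ?case
    using prob_space_bind'[OF Suc assms] sets_bind'[OF Suc assms] by (simp add: space_prob_algebra)
qed (simp add: space_prob_algebra prob_space_return)

lemma prob_space_kpow:
  assumes "P \<in> borel \<rightarrow>\<^sub>M prob_algebra borel"
  shows "prob_space (kpow P n x)" "sets (kpow P n x) = sets borel"
  using kpow_in_space_prob_algebra[OF assms] by (simp_all add: space_prob_algebra)

lemma sum_geometric_weights_Suc:
  fixes J :: "nat \<Rightarrow> ennreal" and q :: real
  assumes "0 \<le> q"
  shows "ennreal (q\<^sup>2) * (\<Sum>k<N. ennreal (q ^ (2 * (N - 1 - k))) * J k) + J N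
    = (\<Sum>k<Suc N. ennreal (q ^ (2 * (Suc N - 1 - k))) * J k)"
proof -
  have "ennreal (q\<^sup>2) * (ennreal (q ^ (2 * (N - 1 - k))) * J k) = ennreal (q ^ (2 * (N - k))) * J k"
    if "k < N" for k
  proof -
    have "q\<^sup>2 * q ^ (2 * (N - 1 - k)) = q ^ (2 + 2 * (N - 1 - k))"
      by (rule power_add[symmetric])
    also have "2 + 2 * (N - 1 - k) = 2 * (N - k)"
      using that by simp
    finally show ?thesis
      using assms by (simp add: mult.assoc[symmetric] ennreal_mult[symmetric])
  qed
  then show ?thesis
    by (simp add: sum_distrib_left)
qed

section \<open>Kernels contracting \<open>W\<^sub>1\<close>\<close>

locale W1_contracting_kernel =
  fixes P :: "'a::polish_space \<Rightarrow> 'a measure" and \<kappa> :: real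
  assumes kernel_measurable: "P \<in> borel \<rightarrow>\<^sub>M prob_algebra borel"
    and first_moment: "\<And>x. (\<integral>\<^sup>+y. ennreal (dist x y) \<partial>P x) < \<infinity>"
    and kappa_pos: "0 < \<kappa>" and kappa_le_1: "\<kappa> \<le> 1"
    and W1_contraction: "\<And>x y. W1 (P x) (P y) \<le> (1 - \<kappa>) * dist x y"
begin

lemma prob_space_P: "prob_space (P x)" and sets_P: "sets (P x) = sets borel"
  using measurable_space[OF kernel_measurable, of x] by (simp_all add: space_prob_algebra)

lemma lipschitz_on_markov_op:
  assumes "\<And>y. \<bar>h y\<bar> \<le> B" "L-lipschitz_on UNIV h"
  shows "((1 - \<kappa>) * L)-lipschitz_on UNIV (markov_op P h)"
proof (rule lipschitz_onI)
  fix a b :: 'a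
  have "\<bar>markov_op P h a - markov_op P h b\<bar> \<le> L * W1 (P a) (P b)"
    unfolding markov_op_def
    by (rule abs_integral_diff_le_W1[OF prob_space_P sets_P prob_space_P sets_P first_moment first_moment assms])
  also have "\<dots> \<le> L * ((1 - \<kappa>) * dist a b)"
    by (intro mult_left_mono W1_contraction lipschitz_on_nonneg[OF assms(2)])
  finally show "dist (markov_op P h a) (markov_op P h b) \<le> (1 - \<kappa>) * L * dist a b"
    by (simp add: dist_real_def mult_ac)
qed (use kappa_le_1 lipschitz_on_nonneg[OF assms(2)] in simp)

lemma markov_op_bounded_lipschitz:
  assumes "\<And>y. \<bar>h y\<bar> \<le> B" "L-lipschitz_on UNIV h"
  shows "\<And>y. \<bar>markov_op P h y\<bar> \<le> B" "((1 - \<kappa>) * L)-lipschitz_on UNIV (markov_op P h)"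
  using abs_markov_op_le[OF kernel_measurable lipschitz_on_borel_measurable[OF assms(2)] assms(1)]
    lipschitz_on_markov_op[OF assms] by simp_all

lemma var_P_divide_le:
  assumes "\<And>y. \<bar>h y\<bar> \<le> B" "L-lipschitz_on UNIV h" "0 < L"
  shows "ennreal (var (P x) h / L\<^sup>2) \<le> sigma2 P x / nx P x"
proof -
  have "1-lipschitz_on UNIV (\<lambda>y. h y / L)"
    using lipschitz_on_cmult_real_nonneg[OF assms(2), of "1 / L"] assms(3) by simp
  moreover have "integrable (P x) (\<lambda>y. (h y / L)\<^sup>2)"
    using integrable_bounded(2)[OF prob_space.finite_measure[OF prob_space_P], of h x B] assms(1)
      lipschitz_on_borel_measurable[OF assms(2)] by (simp add: measurable_cong_sets[OF sets_P refl] power_divide)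
  ultimately show ?thesis
    using var_le_sigma2_divide_nx[of P x "\<lambda>y. h y / L"] prob_space_P sets_P by (simp add: var_divide)
qed

lemma var_P_le:
  assumes "\<And>y. \<bar>h y\<bar> \<le> B" "L-lipschitz_on UNIV h"
  shows "ennreal (var (P x) h) \<le> ennreal (L\<^sup>2) * (sigma2 P x / nx P x)"
proof (cases "L = 0")
  case True
  then show ?thesis
    using var_eq_0_if_lipschitz_0[OF prob_space_P] assms(2) by simp
next
  case False
  then have "0 < L"
    using lipschitz_on_nonneg[OF assms(2)] by simp
  then have "ennreal (var (P x) h) = ennreal (L\<^sup>2) * ennreal (var (P x) h / L\<^sup>2)"
    by (subst ennreal_mult''[symmetric]) (simp_all add: var_nonneg)
  also have "\<dots> \<le> ennreal (L\<^sup>2) * (sigma2 P x / nx P x)"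
    using var_P_divide_le[OF assms \<open>0 < L\<close>] by (rule mult_left_mono) simp
  finally show ?thesis .
qed

lemma integral_var_P_le:
  assumes "prob_space \<mu>" "sets \<mu> = sets borel" "\<And>y. \<bar>h y\<bar> \<le> B" "L-lipschitz_on UNIV h"
  shows "ennreal (\<integral>x. var (P x) h \<partial>\<mu>) \<le> ennreal (L\<^sup>2) * (\<integral>\<^sup>+x. sigma2 P x / nx P x \<partial>\<mu>)"
proof -
  have var_measurable: "(\<lambda>x. var (P x) h) \<in> borel_measurable \<mu>"
    using borel_measurable_var_kernel[OF kernel_measurable lipschitz_on_borel_measurable[OF assms(4)] assms(3)]
    by (simp add: measurable_cong_sets[OF assms(2) refl])
  have "ennreal (\<integral>x. var (P x) h \<partial>\<mu>) \<le> (\<integral>\<^sup>+x. ennreal (var (P x) h) \<partial>\<mu>)"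
    using var_measurable by (simp add: integral_eq_nn_integral var_nonneg ennreal_enn2real_if)
  also have "\<dots> \<le> ennreal (L\<^sup>2) * (\<integral>\<^sup>+x. sigma2 P x / nx P x \<partial>\<mu>)"
  proof (cases "L = 0")
    case True
    then show ?thesis
      using var_eq_0_if_lipschitz_0[OF prob_space_P] assms(4) by simp
  next
    case False
    then have L: "0 < L"
      using lipschitz_on_nonneg[OF assms(4)] by simp
    then have "(\<integral>\<^sup>+x. ennreal (var (P x) h) \<partial>\<mu>) = (\<integral>\<^sup>+x. ennreal (L\<^sup>2) * ennreal (var (P x) h / L\<^sup>2) \<partial>\<mu>)"
      by (subst ennreal_mult''[symmetric]) (simp_all add: var_nonneg)
    also have "\<dots> = ennreal (L\<^sup>2) * (\<integral>\<^sup>+x. ennreal (var (P x) h / L\<^sup>2) \<partial>\<mu>)"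
      using var_measurable by (intro nn_integral_cmult borel_measurable_divide borel_measurable_const measurable_compose[OF _ measurable_ennreal])
    also have "\<dots> \<le> ennreal (L\<^sup>2) * (\<integral>\<^sup>+x. sigma2 P x / nx P x \<partial>\<mu>)"
      using var_P_divide_le[OF assms(3,4) L] by (intro mult_left_mono nn_integral_mono) simp_all
    finally show ?thesis .
  qed
  finally show ?thesis .
qed

lemma var_kpow_le:
  assumes "\<And>y. \<bar>h y\<bar> \<le> B" "L-lipschitz_on UNIV h"
  shows "ennreal (var (kpow P N x) h)
    \<le> ennreal (L\<^sup>2) * (\<Sum>k<N. ennreal ((1 - \<kappa>) ^ (2 * (N - 1 - k))) * (\<integral>\<^sup>+y. sigma2 P y / nx P y \<partial>kpow P k x))"
  using assms
proof (induction N arbitrary: h L)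
  case 0
  then show ?case
    using lipschitz_on_borel_measurable[OF "0.prems"(2)] by (simp add: var_def integral_return)
next
  case (Suc N)
  define J where "J k = (\<integral>\<^sup>+y. sigma2 P y / nx P y \<partial>kpow P k x)" for k
  note kpow = prob_space_kpow[OF kernel_measurable, of N x]
  note Ph = markov_op_bounded_lipschitz[OF Suc.prems]
  have "var (kpow P (Suc N) x) h = (\<integral>y. var (P y) h \<partial>kpow P N x) + var (kpow P N x) (markov_op P h)"
    using var_bind[OF kpow kernel_measurable lipschitz_on_borel_measurable[OF Suc.prems(2)] Suc.prems(1)] by simp
  then have "ennreal (var (kpow P (Suc N) x) h)
      = ennreal (\<integral>y. var (P y) h \<partial>kpow P N x) + ennreal (var (kpow P N x) (markov_op P h))"
    by (simp add: var_nonneg integral_nonneg_AE)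
  also have "\<dots> \<le> ennreal (L\<^sup>2) * J N
      + ennreal (((1 - \<kappa>) * L)\<^sup>2) * (\<Sum>k<N. ennreal ((1 - \<kappa>) ^ (2 * (N - 1 - k))) * J k)"
    unfolding J_def by (intro add_mono integral_var_P_le[OF kpow Suc.prems] Suc.IH[OF Ph])
  also have "\<dots> = ennreal (L\<^sup>2) * (ennreal ((1 - \<kappa>)\<^sup>2) * (\<Sum>k<N. ennreal ((1 - \<kappa>) ^ (2 * (N - 1 - k))) * J k) + J N)"
    by (simp add: power_mult_distrib ennreal_mult distrib_left mult_ac)
  also have "\<dots> = ennreal (L\<^sup>2) * (\<Sum>k<Suc N. ennreal ((1 - \<kappa>) ^ (2 * (Suc N - 1 - k))) * J k)"
    using kappa_le_1 by (simp only: sum_geometric_weights_Suc)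
  finally show ?case
    unfolding J_def .
qed

lemma nn_variance_kpow_le:
  assumes "C-lipschitz_on UNIV f"
  shows "nn_variance (kpow P N x) f
    \<le> ennreal ((lip_norm f)\<^sup>2) * (\<Sum>k<N. ennreal ((1 - \<kappa>) ^ (2 * (N - 1 - k))) * (\<integral>\<^sup>+y. sigma2 P y / nx P y \<partial>kpow P k x))"
proof (rule nn_variance_lipschitz_le[OF prob_space_kpow[OF kernel_measurable] lipschitz_on_lip_norm[OF assms]])
  fix g :: "'a \<Rightarrow> real" and B
  assume "\<And>y. \<bar>g y\<bar> \<le> B" "(max 0 (lip_norm f))-lipschitz_on UNIV g"
  then have "ennreal (var (kpow P N x) g)
      \<le> ennreal ((max 0 (lip_norm f))\<^sup>2) * (\<Sum>k<N. ennreal ((1 - \<kappa>) ^ (2 * (N - 1 - k))) * (\<integral>\<^sup>+y. sigma2 P y / nx P y \<partial>kpow P k x))"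
    by (rule var_kpow_le)
  also have "\<dots> \<le> ennreal ((lip_norm f)\<^sup>2) * (\<Sum>k<N. ennreal ((1 - \<kappa>) ^ (2 * (N - 1 - k))) * (\<integral>\<^sup>+y. sigma2 P y / nx P y \<partial>kpow P k x))"
    by (intro mult_right_mono ennreal_leI) (simp_all add: max_def)
  finally show "ennreal (var (kpow P N x) g) \<le> \<dots>" .
qed

end

section \<open>Invariant measures\<close>

lemma var_tendsto_0_if_lipschitz_tendsto_0:
  fixes g :: "nat \<Rightarrow> 'a::metric_space \<Rightarrow> real"
  assumes "prob_space M" "sets M = sets borel"
    and "\<And>n y. \<bar>g n y\<bar> \<le> B" "\<And>n. (c n)-lipschitz_on UNIV (g n)" "c \<longlonglongrightarrow> 0"
  shows "(\<lambda>n. var M (g n)) \<longlonglongrightarrow> 0"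
proof -
  interpret prob_space M by fact
  define y\<^sub>0 :: 'a where "y\<^sub>0 = undefined"
  define w where "w n y = min (4 * B\<^sup>2) ((c n * dist y y\<^sub>0)\<^sup>2)" for n y
  have w_measurable: "w n \<in> borel_measurable M" for n
    unfolding w_def measurable_cong_sets[OF assms(2) refl]
    by (intro borel_measurable_continuous_onI continuous_intros)
  have w_bounded: "\<bar>w n y\<bar> \<le> 4 * B\<^sup>2" for n y
    by (simp add: w_def)
  have g_measurable: "g n \<in> borel_measurable M" for n
    using lipschitz_on_borel_measurable[OF assms(4)] measurable_cong_sets[OF assms(2) refl] by blast
  have var_le: "var M (g n) \<le> (\<integral>y. w n y \<partial>M)" for n
  proof -
    note integrable = integrable_bounded[OF finite_measure_axioms g_measurable assms(3)]
    have "var M (g n) \<le> (\<integral>y. (g n y - g n y\<^sub>0)\<^sup>2 \<partial>M)"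
      using integrable by (rule var_le_integral_square_diff[OF prob_space_axioms])
    also have "\<dots> \<le> (\<integral>y. w n y \<partial>M)"
    proof (intro integral_mono)
      show "integrable M (\<lambda>y. (g n y - g n y\<^sub>0)\<^sup>2)"
        using integrable by (simp add: power2_diff)
      show "integrable M (w n)"
        using w_measurable w_bounded by (rule integrable_bounded(1)[OF finite_measure_axioms])
      fix y
      have "\<bar>g n y - g n y\<^sub>0\<bar> \<le> 2 * B"
        using assms(3)[of n y] assms(3)[of n y\<^sub>0] by linarith
      then have "\<bar>g n y - g n y\<^sub>0\<bar>\<^sup>2 \<le> (2 * B)\<^sup>2"
        by (rule power_mono) simp
      moreover have "\<bar>g n y - g n y\<^sub>0\<bar> \<le> \<bar>c n * dist y y\<^sub>0\<bar>"
        using lipschitz_onD[OF assms(4)[of n], of y y\<^sub>0] by (simp add: dist_real_def)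
      then have "\<bar>g n y - g n y\<^sub>0\<bar>\<^sup>2 \<le> \<bar>c n * dist y y\<^sub>0\<bar>\<^sup>2"
        by (rule power_mono) simp
      ultimately show "(g n y - g n y\<^sub>0)\<^sup>2 \<le> w n y"
        unfolding w_def by (simp add: power_mult_distrib)
    qed
    finally show ?thesis .
  qed
  have "(\<lambda>n. \<integral>y. w n y \<partial>M) \<longlonglongrightarrow> (\<integral>y. 0 \<partial>M)"
  proof (rule integral_dominated_convergence[where w="\<lambda>_. 4 * B\<^sup>2"])
    show "AE y in M. (\<lambda>n. w n y) \<longlonglongrightarrow> 0"
    proof (rule AE_I2)
      fix y
      have "(\<lambda>n. min (4 * B\<^sup>2) ((c n * dist y y\<^sub>0)\<^sup>2)) \<longlonglongrightarrow> min (4 * B\<^sup>2) ((0 * dist y y\<^sub>0)\<^sup>2)"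
        by (intro tendsto_min tendsto_const tendsto_power tendsto_mult assms(5))
      then show "(\<lambda>n. w n y) \<longlonglongrightarrow> 0"
        by (simp add: w_def)
    qed
  qed (use w_measurable w_bounded in simp_all)
  then have w_limit: "(\<lambda>n. \<integral>y. w n y \<partial>M) \<longlonglongrightarrow> 0"
    by simp
  show ?thesis
    by (rule tendsto_sandwich[OF _ _ tendsto_const w_limit]) (simp_all add: var_nonneg var_le)
qed

context W1_contracting_kernel
begin

lemma iterated_markov_op_bounded_lipschitz:
  assumes "\<And>y. \<bar>h y\<bar> \<le> B" "L-lipschitz_on UNIV h"
  shows "\<And>y. \<bar>(markov_op P ^^ n) h y\<bar> \<le> B" "((1 - \<kappa>) ^ n * L)-lipschitz_on UNIV ((markov_op P ^^ n) h)"
proof -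
  have "(\<forall>y. \<bar>(markov_op P ^^ n) h y\<bar> \<le> B) \<and> ((1 - \<kappa>) ^ n * L)-lipschitz_on UNIV ((markov_op P ^^ n) h)"
  proof (induction n)
    case (Suc n)
    then show ?case
      using markov_op_bounded_lipschitz[of "(markov_op P ^^ n) h" B "(1 - \<kappa>) ^ n * L"] by (auto simp: mult.assoc)
  qed (use assms in simp)
  then show "\<And>y. \<bar>(markov_op P ^^ n) h y\<bar> \<le> B" "((1 - \<kappa>) ^ n * L)-lipschitz_on UNIV ((markov_op P ^^ n) h)"
    by simp_all
qed

lemma var_invariant_le_var_markov_op:
  assumes "prob_space \<pi>" "sets \<pi> = sets borel" "\<pi> \<bind> P = \<pi>"
    and "\<And>y. sigma2 P y / nx P y \<le> ennreal S" "0 \<le> S"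
    and "\<And>y. \<bar>h y\<bar> \<le> B" "L-lipschitz_on UNIV h"
  shows "var \<pi> h \<le> L\<^sup>2 * S + var \<pi> (markov_op P h)"
proof -
  have "ennreal (\<integral>y. var (P y) h \<partial>\<pi>) \<le> ennreal (L\<^sup>2) * (\<integral>\<^sup>+y. sigma2 P y / nx P y \<partial>\<pi>)"
    by (rule integral_var_P_le[OF assms(1,2,6,7)])
  also have "\<dots> \<le> ennreal (L\<^sup>2) * (\<integral>\<^sup>+y. ennreal S \<partial>\<pi>)"
    using assms(4) by (intro mult_left_mono nn_integral_mono) simp_all
  also have "\<dots> = ennreal (L\<^sup>2 * S)"
    using assms(5) by (simp add: prob_space.emeasure_space_1[OF assms(1)] ennreal_mult)
  finally have "(\<integral>y. var (P y) h \<partial>\<pi>) \<le> L\<^sup>2 * S"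
    using assms(5) by (simp add: ennreal_le_iff)
  then show ?thesis
    using var_bind[OF assms(1,2) kernel_measurable lipschitz_on_borel_measurable[OF assms(7)] assms(6)] assms(3)
    by simp
qed

lemma var_invariant_le:
  assumes "prob_space \<pi>" "sets \<pi> = sets borel" "\<pi> \<bind> P = \<pi>"
    and "\<And>y. sigma2 P y / nx P y \<le> ennreal S" "0 \<le> S"
    and "\<And>y. \<bar>h y\<bar> \<le> B" "L-lipschitz_on UNIV h"
  shows "var \<pi> h \<le> L\<^sup>2 * S / (1 - (1 - \<kappa>)\<^sup>2)"
proof -
  define q where "q = (1 - \<kappa>)\<^sup>2"
  have q: "0 \<le> q" "q < 1"
    using kappa_pos kappa_le_1 by (simp_all add: q_def abs_square_less_1)
  note iterate = iterated_markov_op_bounded_lipschitz[OF assms(6,7)]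
  have unrolled: "var \<pi> h \<le> L\<^sup>2 * S * (\<Sum>k<n. q ^ k) + var \<pi> ((markov_op P ^^ n) h)" for n
  proof (induction n)
    case (Suc n)
    have "var \<pi> ((markov_op P ^^ n) h) \<le> ((1 - \<kappa>) ^ n * L)\<^sup>2 * S + var \<pi> ((markov_op P ^^ Suc n) h)"
      using var_invariant_le_var_markov_op[OF assms(1-5) iterate] by simp
    also have "((1 - \<kappa>) ^ n * L)\<^sup>2 = L\<^sup>2 * q ^ n"
      by (simp add: q_def power_mult_distrib power_mult[symmetric] mult.commute)
    finally show ?case
      using Suc by (simp add: algebra_simps)
  qed simp
  have "(\<Sum>k<n. q ^ k) \<le> 1 / (1 - q)" for n
    using q by (simp add: sum_gp_strict divide_right_mono)
  then have sum_bound: "L\<^sup>2 * S * (\<Sum>k<n. q ^ k) \<le> L\<^sup>2 * S * (1 / (1 - q))" for n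
    using assms(5) by (intro mult_left_mono) simp_all
  have "var \<pi> h \<le> L\<^sup>2 * S / (1 - q) + var \<pi> ((markov_op P ^^ n) h)" for n
    using unrolled[of n] sum_bound[of n] by simp
  moreover have "(\<lambda>n. (1 - \<kappa>) ^ n * L) \<longlonglongrightarrow> 0"
    using kappa_pos kappa_le_1 by (intro tendsto_mult_left_zero LIMSEQ_power_zero) simp
  then have "(\<lambda>n. L\<^sup>2 * S / (1 - q) + var \<pi> ((markov_op P ^^ n) h)) \<longlonglongrightarrow> L\<^sup>2 * S / (1 - q) + 0"
    by (intro tendsto_add tendsto_const var_tendsto_0_if_lipschitz_tendsto_0[OF assms(1,2) iterate])
  ultimately show ?thesis
    by (simp add: q_def LIMSEQ_le_const)
qed

lemma nn_variance_invariant_le: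
  assumes "\<And>x. sigma2 P x / nx P x \<le> ennreal B"
    and "prob_space \<pi>" "sets \<pi> = sets borel" "\<pi> \<bind> P = \<pi>" "C-lipschitz_on UNIV f"
  shows "nn_variance \<pi> f \<le> ennreal ((lip_norm f)\<^sup>2) * (SUP x. sigma2 P x / (nx P x * ennreal \<kappa>))"
proof -
  define T where "T = (SUP x. sigma2 P x / (nx P x * ennreal \<kappa>))"
  have divide_kappa: "sigma2 P x / (nx P x * ennreal \<kappa>) = sigma2 P x / nx P x / ennreal \<kappa>" for x
    using kappa_pos by (simp add: divide_ennreal_def ennreal_inverse_mult' mult.assoc)
  have "T \<le> ennreal B / ennreal \<kappa>"
    unfolding T_def divide_kappa by (intro SUP_least divide_right_mono_ennreal assms(1))
  also have "\<dots> < \<infinity>"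
    using kappa_pos by (simp add: less_top[symmetric] ennreal_divide_eq_top_iff)
  finally obtain t where t: "0 \<le> t" "T = ennreal t"
    by (cases T) auto
  have s_le: "sigma2 P x / nx P x \<le> ennreal (\<kappa> * t)" for x
  proof -
    have "sigma2 P x / nx P x = sigma2 P x / nx P x / ennreal \<kappa> * ennreal \<kappa>"
      using kappa_pos by (simp add: ennreal_divide_times mult_divide_eq_ennreal)
    also have "\<dots> \<le> ennreal t * ennreal \<kappa>"
      unfolding t(2)[symmetric] T_def divide_kappa by (intro mult_right_mono SUP_upper) simp_all
    finally show ?thesis
      using t(1) kappa_pos by (simp add: ennreal_mult mult.commute)
  qed
  show ?thesis
    unfolding T_def[symmetric]
  proof (rule nn_variance_lipschitz_le[OF assms(2,3) lipschitz_on_lip_norm[OF assms(5)]])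
    fix g :: "'a \<Rightarrow> real" and B'
    assume "\<And>y. \<bar>g y\<bar> \<le> B'" "(max 0 (lip_norm f))-lipschitz_on UNIV g"
    then have "var \<pi> g \<le> (max 0 (lip_norm f))\<^sup>2 * (\<kappa> * t) / (1 - (1 - \<kappa>)\<^sup>2)"
      using kappa_pos t(1) by (intro var_invariant_le[OF assms(2-4) s_le]) simp_all
    also have "\<dots> = (max 0 (lip_norm f))\<^sup>2 * t / (2 - \<kappa>)"
    proof -
      have "1 - (1 - \<kappa>)\<^sup>2 = \<kappa> * (2 - \<kappa>)"
        by (simp add: power2_eq_square algebra_simps)
      then show ?thesis
        using kappa_pos by (simp add: mult.left_commute[of _ \<kappa>])
    qed
    also have "\<dots> \<le> (max 0 (lip_norm f))\<^sup>2 * t"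
      using kappa_le_1 t(1) mult_left_mono[of 1 "2 - \<kappa>" "(max 0 (lip_norm f))\<^sup>2 * t"]
      by (simp add: divide_le_eq)
    also have "\<dots> \<le> (lip_norm f)\<^sup>2 * t"
      using t(1) by (intro mult_right_mono) (simp_all add: max_def)
    finally show "ennreal (var \<pi> g) \<le> ennreal ((lip_norm f)\<^sup>2) * T"
      using t by (simp add: ennreal_mult[symmetric] ennreal_leI)
  qed
qed

end

lemma eq_if_W1_contraction_gt_1:
  assumes "1 < \<kappa>" "W1 (P a) (P b) \<le> (1 - \<kappa>) * dist a b"
  shows "a = b"
proof -
  have "0 \<le> (1 - \<kappa>) * dist a b"
    using assms(2) by (smt (verit) W1_def enn2real_nonneg)
  then show ?thesis
    using assms(1) by (simp add: zero_le_mult_iff)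
qed

theorem lemma9:
  fixes P :: "'a::polish_space \<Rightarrow> 'a measure" and \<kappa> :: real
  assumes meas: "P \<in> borel \<rightarrow>\<^sub>M prob_algebra borel"
    and moment: "\<And>x. (\<integral>\<^sup>+ y. ennreal (dist x y) \<partial>P x) < \<infinity>"
    and kappa: "\<kappa> > 0"
    and contr: "\<And>x y. W1 (P x) (P y) \<le> (1 - \<kappa>) * dist x y"
  shows "(\<forall>N::nat. N \<ge> 1 \<longrightarrow> (\<forall>f::'a \<Rightarrow> real. (\<exists>C. C-lipschitz_on UNIV f) \<longrightarrow> (\<forall>x.
            enn2ereal (\<integral>\<^sup>+ y. ennreal ((f y)^2) \<partial>kpow P N x) - ereal ((\<integral> y. f y \<partial>kpow P N x)^2)
            \<le> enn2ereal (ennreal ((lip_norm f)^2) *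
                 (\<Sum>k<N. ennreal ((1 - \<kappa>)^(2*(N-1-k))) *
                    (\<integral>\<^sup>+ y. sigma2 P y / nx P y \<partial>kpow P k x))))))
       \<and> ((\<exists>B::real. \<forall>x. sigma2 P x / nx P x \<le> ennreal B) \<longrightarrow>
          (\<forall>\<pi>. prob_space \<pi> \<longrightarrow> sets \<pi> = sets borel \<longrightarrow> Giry_Monad.bind \<pi> P = \<pi> \<longrightarrow>
            (\<forall>f::'a \<Rightarrow> real. (\<exists>C. C-lipschitz_on UNIV f) \<longrightarrow>
               (\<integral>\<^sup>+ y. ennreal ((f y - (\<integral> z. f z \<partial>\<pi>))^2) \<partial>\<pi>)
               \<le> ennreal ((lip_norm f)^2) * (SUP x. sigma2 P x / (nx P x * ennreal \<kappa>)))))"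
proof -
  consider "W1_contracting_kernel P \<kappa>" | "\<And>a b :: 'a. a = b"
  proof (cases "\<kappa> \<le> 1")
    case True
    then show ?thesis
      using meas moment kappa contr by (intro that(1)) unfold_locales
  next
    case False
    then show ?thesis
      by (intro that(2) eq_if_W1_contraction_gt_1[OF _ contr]) simp
  qed
  note kernel_cases = this
  have trivial: "nn_variance M f = 0" if "\<And>a b :: 'a. a = b" for M and f :: "'a \<Rightarrow> real"
  proof -
    have zero: "ennreal ((f a - f b)\<^sup>2) = 0" for a b
      using that[of a b] by simp
    show ?thesis
      unfolding nn_variance_def zero by simp
  qed
  have measurable: "f \<in> borel_measurable M" if "sets M = sets borel" "C-lipschitz_on UNIV f"
    for M and f :: "'a \<Rightarrow> real" and C
    using lipschitz_on_borel_measurable[OF that(2)] measurable_cong_sets[OF that(1) refl] by blast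
  show ?thesis
  proof (intro conjI allI impI; elim exE)
    fix N x and f :: "'a \<Rightarrow> real" and C
    assume lip: "C-lipschitz_on UNIV f"
    have bound: "nn_variance (kpow P N x) f \<le> ennreal ((lip_norm f)\<^sup>2)
        * (\<Sum>k<N. ennreal ((1 - \<kappa>) ^ (2 * (N - 1 - k))) * (\<integral>\<^sup>+y. sigma2 P y / nx P y \<partial>kpow P k x))"
      using kernel_cases
    proof cases
      case 1
      then show ?thesis
        by (rule W1_contracting_kernel.nn_variance_kpow_le[OF _ lip])
    qed (simp add: trivial)
    show "enn2ereal (\<integral>\<^sup>+y. ennreal ((f y)\<^sup>2) \<partial>kpow P N x) - ereal ((\<integral>y. f y \<partial>kpow P N x)\<^sup>2)
        \<le> enn2ereal (ennreal ((lip_norm f)\<^sup>2)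
          * (\<Sum>k<N. ennreal ((1 - \<kappa>) ^ (2 * (N - 1 - k))) * (\<integral>\<^sup>+y. sigma2 P y / nx P y \<partial>kpow P k x)))"
      using second_moment_minus_square_mean_le_nn_variance[OF prob_space_kpow(1)[OF meas]
          measurable[OF prob_space_kpow(2)[OF meas] lip]]
      by (rule order_trans) (use bound in \<open>simp add: less_eq_ennreal.rep_eq\<close>)
  next
    fix B \<pi> and f :: "'a \<Rightarrow> real" and C
    assume bounded: "\<forall>x. sigma2 P x / nx P x \<le> ennreal B"
      and invariant: "prob_space \<pi>" "sets \<pi> = sets borel" "\<pi> \<bind> P = \<pi>"
      and lip: "C-lipschitz_on UNIV f"
    have bound: "nn_variance \<pi> f \<le> ennreal ((lip_norm f)\<^sup>2) * (SUP x. sigma2 P x / (nx P x * ennreal \<kappa>))"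
      using kernel_cases
    proof cases
      case 1
      then show ?thesis
        by (rule W1_contracting_kernel.nn_variance_invariant_le[OF _ bounded[rule_format] invariant lip])
    qed (simp add: trivial)
    show "(\<integral>\<^sup>+y. ennreal ((f y - (\<integral>z. f z \<partial>\<pi>))\<^sup>2) \<partial>\<pi>)
        \<le> ennreal ((lip_norm f)\<^sup>2) * (SUP x. sigma2 P x / (nx P x * ennreal \<kappa>))"
      using nn_integral_centered_square_le_nn_variance[OF invariant(1) measurable[OF invariant(2) lip]] bound
      by (rule order_trans)
  qed
qed

end
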